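(* Let $x\in\{0,1\}^n$ and let $y\in\{0,1\}^n$ have Hamming distance $k$ to $x$, where $1\le k\le cn$. Apply static hypermutation with FCM to $x$. Let $E_y$ be the event that $y$ is evaluated during the hypermutation, and $E_c$ the event that the hypermutation stops earlier (before evaluating the $k$-th string of its sequence) on a constructive mutation. Then $\Pr\{E_y\vee E_c\}\ge \binom{n}{k}^{-1}$. Moreover, if there are no constructive mutations (i.e. no strings that would count as constructive) at Hamming distance smaller than $k$ from $x$, then $\Pr\{E_y\}=\binom{n}{k}^{-1}$.
   Context: Static hypermutation with FCM (stop at first constructive mutation), with constant parameter $0<c\le1$ and mutation potential $M=cn$ (an integer), applied to $x\in\{0,1\}^n$ for a fitness function $f$: distinct bit positions are chosen uniformly at random without replacement and flipped one after another, and after each flip the current string is evaluated; the process stops as soon as the current string is a constructive mutation (a string whose fitness is better than, or in one variant at least as good as, $f(x)$) or after $M$ bits have been flipped. The $i$-th evaluated string thus has Hamming distance $i$ to $x$. *)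

theory Defs
  imports "HOL-Probability.Probability"
begin

definition flip_set :: "bool list \<Rightarrow> nat set \<Rightarrow> bool list" where
  "flip_set x S = map (\<lambda>i. if i \<in> S then \<not> x ! i else x ! i) [0..<length x]"

definition hamming :: "bool list \<Rightarrow> bool list \<Rightarrow> nat" where
  "hamming x y = card {i. i < length x \<and> x ! i \<noteq> y ! i}"

definition constructive :: "(bool list \<Rightarrow> real) \<Rightarrow> bool \<Rightarrow> bool list \<Rightarrow> bool list \<Rightarrow> bool" where
  "constructive f strict x z = (if strict then f z > f x else f z \<ge> f x)"

definition position_seqs :: "nat \<Rightarrow> nat \<Rightarrow> nat list set" where
  "position_seqs n M = {ps. distinct ps \<and> set ps \<subseteq> {..<n} \<and> length ps = M}"

definition hm_seqs :: "nat \<Rightarrow> nat \<Rightarrow> nat list pmf" where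
  "hm_seqs n M = pmf_of_set (position_seqs n M)"

definition hm_string :: "bool list \<Rightarrow> nat list \<Rightarrow> nat \<Rightarrow> bool list" where
  "hm_string x ps i = flip_set x (set (take i ps))"

definition stop_time :: "(bool list \<Rightarrow> bool) \<Rightarrow> bool list \<Rightarrow> nat \<Rightarrow> nat list \<Rightarrow> nat" where
  "stop_time C x M ps =
     (if \<exists>i. 1 \<le> i \<and> i \<le> M \<and> C (hm_string x ps i)
      then LEAST i. 1 \<le> i \<and> i \<le> M \<and> C (hm_string x ps i) else M)"

definition evaluated :: "(bool list \<Rightarrow> bool) \<Rightarrow> bool list \<Rightarrow> nat \<Rightarrow> nat list \<Rightarrow> bool list \<Rightarrow> bool" where
  "evaluated C x M ps z = (\<exists>i. 1 \<le> i \<and> i \<le> stop_time C x M ps \<and> hm_string x ps i = z)"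

definition stops_early :: "(bool list \<Rightarrow> bool) \<Rightarrow> bool list \<Rightarrow> nat \<Rightarrow> nat list \<Rightarrow> nat \<Rightarrow> bool" where
  "stops_early C x M ps k = (stop_time C x M ps < k \<and> C (hm_string x ps (stop_time C x M ps)))"

end

theory Submission
  imports Defs
begin

text \<open>The k-th string of the sequence equals y exactly when the first k flipped positions are
  the k positions where x and y differ, in some order, which happens with probability
  k! (n-k)! / n! = 1 / (n choose k). On this event the process either reaches step k and evaluates
  y, or has stopped earlier, necessarily on a constructive mutation. Since the i-th string has
  Hamming distance i to x, y can only be evaluated at step k; if no string at distance below k is
  constructive, the process does reach step k, so E_y is exactly this event.\<close>

lemma card_distinct_lists_mult_fact:
  assumes "finite A" "m \<le> card A"
  shows "card {xs. length xs = m \<and> distinct xs \<and> set xs \<subseteq> A} * fact (card A - m)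
           = (fact (card A) :: nat)"
  using card_lists_distinct_length_eq[OF assms] fact_eq_fact_times[of "card A - m" "card A"]
  by (simp add: Suc_diff_le assms(2) mult.commute)

lemma distinct_lists_with_prefix_set:
  assumes "D \<subseteq> A" "finite D" "card D = k" "k \<le> m"
  shows "{xs. length xs = m \<and> distinct xs \<and> set xs \<subseteq> A \<and> set (take k xs) = D}
         = (\<lambda>(a, b). a @ b) `
             ({a. length a = k \<and> distinct a \<and> set a \<subseteq> D}
              \<times> {b. length b = m - k \<and> distinct b \<and> set b \<subseteq> A - D})"
proof (intro set_eqI iffI)
  fix xs assume "xs \<in> {xs. length xs = m \<and> distinct xs \<and> set xs \<subseteq> A \<and> set (take k xs) = D}"
  then have xs: "length xs = m" "distinct xs" "set xs \<subseteq> A" "set (take k xs) = D" by auto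
  have "set (take k xs) \<inter> set (drop k xs) = {}"
    using xs(2) distinct_append[of "take k xs" "drop k xs"] by simp
  then have "set (drop k xs) \<subseteq> A - D"
    using xs(3,4) set_drop_subset[of k xs] by blast
  with xs assms(4) have "(take k xs, drop k xs)
      \<in> {a. length a = k \<and> distinct a \<and> set a \<subseteq> D} \<times> {b. length b = m - k \<and> distinct b \<and> set b \<subseteq> A - D}"
    by simp
  then show "xs \<in> (\<lambda>(a, b). a @ b) `
      ({a. length a = k \<and> distinct a \<and> set a \<subseteq> D} \<times> {b. length b = m - k \<and> distinct b \<and> set b \<subseteq> A - D})"
    by (rule rev_image_eqI) simp
next
  fix xs assume "xs \<in> (\<lambda>(a, b). a @ b) `
      ({a. length a = k \<and> distinct a \<and> set a \<subseteq> D} \<times> {b. length b = m - k \<and> distinct b \<and> set b \<subseteq> A - D})"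
  then obtain a b where ab: "xs = a @ b" "length a = k" "distinct a" "set a \<subseteq> D"
    "length b = m - k" "distinct b" "set b \<subseteq> A - D" by auto
  have "set a = D"
    using ab(2-4) assms(2,3) by (simp add: card_subset_eq distinct_card)
  with ab assms show "xs \<in> {xs. length xs = m \<and> distinct xs \<and> set xs \<subseteq> A \<and> set (take k xs) = D}"
    by auto
qed

lemma card_distinct_lists_with_prefix_set:
  assumes "finite A" "D \<subseteq> A" "card D = k" "k \<le> m" "m \<le> card A"
  shows "card {xs. length xs = m \<and> distinct xs \<and> set xs \<subseteq> A \<and> set (take k xs) = D}
           * fact (card A - m) = (fact k * fact (card A - k) :: nat)"
proof -
  let ?P = "{a. length a = k \<and> distinct a \<and> set a \<subseteq> D}"
  let ?Q = "{b. length b = m - k \<and> distinct b \<and> set b \<subseteq> A - D}"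
  have finD: "finite D" using assms(1,2) finite_subset by blast
  have card_P: "card ?P = fact k"
    using card_distinct_lists_mult_fact[OF finD, of k] assms(3) by simp
  have card_AD: "card (A - D) = card A - k"
    using assms(2,3) finD by (simp add: card_Diff_subset)
  have card_Q: "card ?Q * fact (card A - m) = fact (card A - k)"
    using card_distinct_lists_mult_fact[of "A - D" "m - k"] assms(1,4,5) card_AD by simp
  have "inj_on (\<lambda>(a, b). a @ b) (?P \<times> ?Q)"
  proof (rule inj_onI)
    fix u v assume "u \<in> ?P \<times> ?Q" "v \<in> ?P \<times> ?Q" "(\<lambda>(a, b). a @ b) u = (\<lambda>(a, b). a @ b) v"
    then show "u = v"
      by (cases u, cases v) (simp add: append_eq_append_conv)
  qed
  then have "card ((\<lambda>(a, b). a @ b) ` (?P \<times> ?Q)) = card ?P * card ?Q"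
    by (simp only: card_image card_cartesian_product)
  then show ?thesis
    using distinct_lists_with_prefix_set[OF assms(2) finD assms(3,4)] card_P card_Q
    by (simp add: mult.assoc)
qed

lemma finite_position_seqs: "finite (position_seqs n M)"
  unfolding position_seqs_def
  by (rule finite_subset[OF _ finite_lists_length_eq[of "{..<n}" M]]) auto

lemma set_pmf_hm_seqs:
  assumes "M \<le> n"
  shows "set_pmf (hm_seqs n M) = position_seqs n M"
proof -
  have "[0..<M] \<in> position_seqs n M"
    using assms by (auto simp: position_seqs_def)
  then show ?thesis
    unfolding hm_seqs_def using finite_position_seqs by (intro set_pmf_of_set) auto
qed

lemma measure_pmf_prob_mono_set_pmf:
  "A \<inter> set_pmf p \<subseteq> B \<Longrightarrow> measure_pmf.prob p A \<le> measure_pmf.prob p B"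
  by (metis measure_Int_set_pmf measure_pmf.finite_measure_mono sets_measure_pmf UNIV_I)

lemma measure_pmf_prob_cong_set_pmf:
  "A \<inter> set_pmf p = B \<inter> set_pmf p \<Longrightarrow> measure_pmf.prob p A = measure_pmf.prob p B"
  by (metis measure_Int_set_pmf)

lemma prob_prefix_set_hm_seqs:
  assumes "D \<subseteq> {..<n}" "card D = k" "k \<le> M" "M \<le> n"
  shows "measure_pmf.prob (hm_seqs n M) {ps. set (take k ps) = D} = 1 / real (n choose k)"
proof -
  define S where "S = position_seqs n M"
  define A where "A = S \<inter> {ps. set (take k ps) = D}"
  have S_eq: "S = {xs. length xs = M \<and> distinct xs \<and> set xs \<subseteq> {..<n}}"
    by (auto simp: S_def position_seqs_def)
  have card_S: "card S * fact (n - M) = fact n"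
    using card_distinct_lists_mult_fact[of "{..<n}" M] assms(4) by (simp add: S_eq)
  have "A = {xs. length xs = M \<and> distinct xs \<and> set xs \<subseteq> {..<n} \<and> set (take k xs) = D}"
    by (auto simp: A_def S_eq)
  then have card_A: "card A * fact (n - M) = fact k * fact (n - k)"
    using card_distinct_lists_with_prefix_set[of "{..<n}" D k M] assms by simp
  have "card S * fact (n - M) = fact k * fact (n - k) * (n choose k)"
    using card_S binomial_fact_lemma[of k n] assms(3,4) by simp
  also have "\<dots> = card A * (n choose k) * fact (n - M)"
    by (simp flip: card_A)
  finally have "card S * fact (n - M) = card A * (n choose k) * fact (n - M)" .
  then have card_S_A: "card S = card A * (n choose k)"
    by simp
  have "card S \<noteq> 0"
    using card_S by (metis fact_nonzero mult_0)
  then have "S \<noteq> {}" and "card A \<noteq> 0"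
    using card_S_A by auto
  then show ?thesis
    using measure_pmf_of_set[of S "{ps. set (take k ps) = D}"] finite_position_seqs[of n M] card_S_A
    by (simp add: hm_seqs_def S_def[symmetric] A_def[symmetric])
qed

lemma length_flip_set [simp]: "length (flip_set x S) = length x"
  by (simp add: flip_set_def)

lemma nth_flip_set:
  "i < length x \<Longrightarrow> flip_set x S ! i = (if i \<in> S then \<not> x ! i else x ! i)"
  by (simp add: flip_set_def)

lemma flip_set_eq_iff:
  assumes "S \<subseteq> {..<length x}" "length y = length x"
  shows "flip_set x S = y \<longleftrightarrow> S = {i. i < length x \<and> x ! i \<noteq> y ! i}"
proof
  assume "flip_set x S = y"
  then show "S = {i. i < length x \<and> x ! i \<noteq> y ! i}"
    using assms(1) by (auto simp: nth_flip_set split: if_splits)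
next
  assume "S = {i. i < length x \<and> x ! i \<noteq> y ! i}"
  then show "flip_set x S = y"
    using assms(2) by (intro nth_equalityI) (auto simp: nth_flip_set)
qed

lemma hamming_flip_set:
  assumes "S \<subseteq> {..<length x}"
  shows "hamming x (flip_set x S) = card S"
proof -
  have "{i. i < length x \<and> x ! i \<noteq> flip_set x S ! i} = S"
    using assms by (auto simp: nth_flip_set split: if_splits)
  then show ?thesis by (simp add: hamming_def)
qed

lemma set_take_position_seqs:
  assumes "ps \<in> position_seqs n M" "i \<le> M"
  shows "set (take i ps) \<subseteq> {..<n}" "card (set (take i ps)) = i"
  using assms set_take_subset[of i ps]
  by (auto simp: position_seqs_def distinct_card)

lemma hamming_hm_string:
  assumes "ps \<in> position_seqs n M" "i \<le> M" "length x = n"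
  shows "hamming x (hm_string x ps i) = i"
  using set_take_position_seqs[OF assms(1,2)] assms(3)
  by (simp add: hm_string_def hamming_flip_set)

lemma hm_string_eq_iff:
  assumes "ps \<in> position_seqs n M" "k \<le> M" "length x = n" "length y = n"
  shows "hm_string x ps k = y \<longleftrightarrow> set (take k ps) = {i. i < n \<and> x ! i \<noteq> y ! i}"
  using set_take_position_seqs(1)[OF assms(1,2)] assms(3,4)
  by (simp add: hm_string_def flip_set_eq_iff)

lemma stop_time_le: "stop_time C x M ps \<le> M"
  unfolding stop_time_def by (auto intro: Least_le order_trans)

lemma stop_time_cases:
  "stop_time C x M ps = M \<or> C (hm_string x ps (stop_time C x M ps))"
  unfolding stop_time_def by (auto intro: LeastI2_ex)

lemma le_stop_time:
  assumes "\<And>i. 1 \<le> i \<Longrightarrow> i < k \<Longrightarrow> \<not> C (hm_string x ps i)" "k \<le> M"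
  shows "k \<le> stop_time C x M ps"
proof (cases "\<exists>i. 1 \<le> i \<and> i \<le> M \<and> C (hm_string x ps i)")
  case True
  then have "1 \<le> stop_time C x M ps \<and> C (hm_string x ps (stop_time C x M ps))"
    unfolding stop_time_def by (auto intro: LeastI2_ex)
  with assms(1) show ?thesis by (meson not_le)
next
  case False
  with assms(2) show ?thesis unfolding stop_time_def by (simp only: if_False)
qed

lemma evaluated_or_stops_early:
  assumes "hm_string x ps k = y" "1 \<le> k" "k \<le> M"
  shows "evaluated C x M ps y \<or> stops_early C x M ps k"
  using assms stop_time_cases[of C x M ps]
  by (cases "k \<le> stop_time C x M ps") (auto simp: evaluated_def stops_early_def)

lemma evaluated_iff_hm_string_eq:
  assumes "ps \<in> position_seqs n M" "length x = n" "length y = n"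
    and "hamming x y = k" "1 \<le> k" "k \<le> M"
    and no_C: "\<forall>z. length z = n \<and> 1 \<le> hamming x z \<and> hamming x z < k \<longrightarrow> \<not> C z"
  shows "evaluated C x M ps y \<longleftrightarrow> hm_string x ps k = y"
proof
  assume "evaluated C x M ps y"
  then obtain i where i: "1 \<le> i" "i \<le> stop_time C x M ps" "hm_string x ps i = y"
    unfolding evaluated_def by blast
  then have "i \<le> M"
    using stop_time_le order_trans by blast
  then have "i = k"
    using hamming_hm_string[OF assms(1) \<open>i \<le> M\<close> assms(2)] i(3) assms(4) by simp
  with i(3) show "hm_string x ps k = y" by simp
next
  assume y: "hm_string x ps k = y"
  have "\<not> C (hm_string x ps i)" if "1 \<le> i" "i < k" for i
    using no_C hamming_hm_string[OF assms(1) _ assms(2), of i] that assms(2,6)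
    by (simp add: hm_string_def)
  then have "k \<le> stop_time C x M ps"
    using assms(6) by (rule le_stop_time)
  with y assms(5) show "evaluated C x M ps y"
    unfolding evaluated_def by blast
qed

theorem lemma1:
  fixes n M k :: nat and c :: real and f :: "bool list \<Rightarrow> real" and strict :: bool
    and x y :: "bool list"
  assumes "0 < c" and "c \<le> 1" and "real M = c * real n"
    and "length x = n" and "length y = n"
    and "hamming x y = k" and "1 \<le> k" and "k \<le> M"
  shows "measure_pmf.prob (hm_seqs n M)
           {ps. evaluated (constructive f strict x) x M ps y
                \<or> stops_early (constructive f strict x) x M ps k} \<ge> 1 / real (n choose k)
         \<and> ((\<forall>z. length z = n \<and> 1 \<le> hamming x z \<and> hamming x z < k
               \<longrightarrow> \<not> constructive f strict x z) \<longrightarrow>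
         measure_pmf.prob (hm_seqs n M)
           {ps. evaluated (constructive f strict x) x M ps y} = 1 / real (n choose k))"
proof -
  let ?C = "constructive f strict x"
  let ?p = "measure_pmf.prob (hm_seqs n M)"
  define D where "D = {i. i < n \<and> x ! i \<noteq> y ! i}"
  define A where "A = {ps. set (take k ps) = D}"
  have "M \<le> n"
    using assms(2,3) mult_right_mono[of c 1 "real n"] by simp
  then have set_pmf: "set_pmf (hm_seqs n M) = position_seqs n M"
    by (rule set_pmf_hm_seqs)
  have "card D = k"
    using assms(4,6) by (simp add: D_def hamming_def)
  then have prob_A: "?p A = 1 / real (n choose k)"
    unfolding A_def using \<open>M \<le> n\<close> assms(8)
    by (intro prob_prefix_set_hm_seqs) (auto simp: D_def)
  have hm_string_y: "hm_string x ps k = y \<longleftrightarrow> ps \<in> A" if "ps \<in> position_seqs n M" for ps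
    using hm_string_eq_iff[OF that assms(8,4,5)] by (simp add: A_def D_def)
  have "?p A \<le> ?p {ps. evaluated ?C x M ps y \<or> stops_early ?C x M ps k}"
    using hm_string_y evaluated_or_stops_early[where C = ?C and x = x and y = y, OF _ assms(7,8)]
    by (intro measure_pmf_prob_mono_set_pmf) (auto simp: set_pmf)
  moreover have "?p {ps. evaluated ?C x M ps y} = ?p A"
    if "\<forall>z. length z = n \<and> 1 \<le> hamming x z \<and> hamming x z < k \<longrightarrow> \<not> ?C z"
    using evaluated_iff_hm_string_eq[OF _ assms(4-8) that] hm_string_y
    by (intro measure_pmf_prob_cong_set_pmf) (auto simp: set_pmf)
  ultimately show ?thesis
    using prob_A by simp
qed

end
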